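(* Let $A\in\mathbb{R}^{n\times n}$, let $\bar T\ge1$ be an integer, let $\mathcal{W}\subset\mathbb{R}^n$ be a closed convex set with $0\in\mathcal{W}$, and let $\mathrm{sat}(\cdot|\mathcal{W}):\mathbb{R}^n\to\mathcal{W}$ be a map with $|\mathrm{sat}(w|\mathcal{W})-w|=\min\{|w'|:w+w'\in\mathcal{W}\}$ for all $w$. Define $\bar\eta=\sup\{\eta\ge0:\mathcal{B}_\eta\subset\mathcal{W}\}$, where $\mathcal{B}_\eta=\{w:|w|<\eta\}$, and assume $\bar\eta>0$. For $\mathbf{w}\in\ell^n$ define $\hat{\mathbf{w}}\in\ell^n$ recursively by $\hat w_t=w_t$ for $t<\bar T$ and $$\hat w_t=A^{\bar T}\big(\hat w_{t-\bar T}-\mathrm{sat}(\hat w_{t-\bar T}|\mathcal{W})\big)+w_t\quad(t\ge\bar T).$$ Let $p\in\{1,2,\dots\}\cup\{\infty\}$. Then: (1) for every $0\le\gamma<\min\{1,|A^{\bar T}|\}$: if $\|\mathbf{w}\|_p\le(1-\gamma)\frac{|A^{\bar T}|\,\bar\eta}{|A^{\bar T}|-\gamma}$, then $\|\hat{\mathbf{w}}\|_p\le\frac{1}{1-\gamma}\|\mathbf{w}\|_p$; (2) if $|A^{\bar T}|<1$, then for all $\mathbf{w}\in\ell^n_p$, $\|\hat{\mathbf{w}}\|_p\le\frac{1}{1-|A^{\bar T}|}\|\mathbf{w}\|_p$.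
   Context: $|\cdot|$ is a fixed norm on $\mathbb{R}^n$ and, for matrices, $|A|$ is the induced operator norm. $\ell^n$ is the space of sequences in $\mathbb{R}^n$, $\|\mathbf{x}\|_p=(\sum_k|x_k|^p)^{1/p}$ for $p<\infty$, $\|\mathbf{x}\|_\infty=\sup_k|x_k|$, $\ell^n_p=\{\mathbf{x}:\|\mathbf{x}\|_p<\infty\}$. (In the paper, $\hat{\mathbf{w}}$ is the internal state of a "blended" system level controller in closed loop with the saturated linear system $x_t=Ax_{t-1}+B\,\mathrm{sat}(u_{t-1}|\mathcal{U})+w_t$, whose dynamics reduce to the displayed recursion.) *)

theory Defs
  imports "HOL-Analysis.Analysis" "HOL-Library.Extended_Nat" "HOL-Library.Extended_Real"
begin

definition is_norm :: "(real^'n \<Rightarrow> real) \<Rightarrow> bool" where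
  "is_norm N \<longleftrightarrow> (\<forall>x. N x = 0 \<longleftrightarrow> x = 0) \<and> (\<forall>c x. N (c *\<^sub>R x) = \<bar>c\<bar> * N x)
     \<and> (\<forall>x y. N (x + y) \<le> N x + N y)"

definition opnorm :: "(real^'n \<Rightarrow> real) \<Rightarrow> real^'n^'n \<Rightarrow> real" where
  "opnorm N M = Sup {N (M *v x) | x. N x \<le> 1}"

primrec matpow :: "real^'n^'n \<Rightarrow> nat \<Rightarrow> real^'n^'n" where
  "matpow M 0 = mat 1"
| "matpow M (Suc k) = M ** matpow M k"

definition lpnorm :: "(real^'n \<Rightarrow> real) \<Rightarrow> enat \<Rightarrow> (nat \<Rightarrow> real^'n) \<Rightarrow> ereal" where
  "lpnorm N p x = (case p of
      enat q \<Rightarrow> (if summable (\<lambda>k. N (x k) ^ q)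
                 then ereal ((\<Sum>k. N (x k) ^ q) powr (1 / real q)) else \<infinity>)
    | \<infinity> \<Rightarrow> (SUP k. ereal (N (x k))))"

definition etabar :: "(real^'n \<Rightarrow> real) \<Rightarrow> (real^'n) set \<Rightarrow> ereal" where
  "etabar N W = Sup {ereal \<eta> | \<eta>. \<eta> \<ge> 0 \<and> {w. N w < \<eta>} \<subseteq> W}"

end

theory Submission
  imports Defs
begin

text \<open>Let \<open>m\<close> be the operator norm of \<open>A^T\<close> and \<open>d v = N (v - sat v)\<close> the distance from \<open>v\<close>
to \<open>W\<close>. The recursion gives \<open>N (what t) \<le> m * d (what (t - T)) + N (w t)\<close>, and \<open>d v \<le> N v\<close>
because \<open>0 \<in> W\<close>; so part (2) is an \<open>\<ell>^p\<close> estimate for a delayed scalar recursion with gain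
\<open>m < 1\<close>, which follows from convexity of \<open>s \<mapsto> s^q\<close> (or a supremum bound when \<open>p = \<infinity>\<close>).
For part (1), the open ball of radius \<open>\<eta> = etabar N W\<close> lies in \<open>W\<close>, so \<open>d\<close> has the dead zone
\<open>d v \<le> max 0 (N v - \<eta>)\<close>. The hypothesis bounds every \<open>N (w t)\<close> by \<open>(1 - \<gamma>) R\<close> with
\<open>R = m \<eta> / (m - \<gamma>)\<close>; by induction every \<open>N (what t) \<le> R\<close>, and on that range
\<open>m * d v \<le> \<gamma> * N v\<close>, which reduces part (1) to the same recursion with gain \<open>\<gamma>\<close>.\<close>

lemma convex_comb_power_le:
  fixes x y c :: real
  assumes "0 \<le> x" "0 \<le> y" "0 \<le> c" "c \<le> 1"
  shows "(c * x + (1 - c) * y) ^ q \<le> c * x ^ q + (1 - c) * y ^ q"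
proof -
  have "convex_on {0::real..} (\<lambda>x. x ^ q)"
    using convex_power_even convex_power_odd convex_on_subset by (cases "even q") blast+
  from convex_onD[OF this, of "1 - c" x y] assms show ?thesis by simp
qed

lemma power_powr_inverse:
  fixes y :: real
  assumes "0 \<le> y" "1 \<le> q"
  shows "(y ^ q) powr (1 / real q) = y"
  using assms by (simp add: root_powr_inverse[symmetric] real_root_pos2)

lemma sum_delay_le:
  fixes g :: "nat \<Rightarrow> real"
  assumes "\<And>s. 0 \<le> g s"
  shows "(\<Sum>t<n. if T \<le> t then g (t - T) else 0) \<le> (\<Sum>t<n. g t)"
proof -
  have "(\<Sum>t<n. if T \<le> t then g (t - T) else 0) = (\<Sum>s<n - T. g s)"
    by (induction n) (auto simp: Suc_diff_le not_less_eq_eq)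
  also have "\<dots> \<le> (\<Sum>t<n. g t)"
    by (rule sum_mono2) (use assms in auto)
  finally show ?thesis .
qed

context
  fixes N :: "real^'n \<Rightarrow> real"
  assumes N: "is_norm N"
begin

lemma is_norm_zero: "N 0 = 0"
  and is_norm_scaleR: "N (c *\<^sub>R x) = \<bar>c\<bar> * N x"
  and is_norm_triangle: "N (x + y) \<le> N x + N y"
  and is_norm_eq_0: "N x = 0 \<longleftrightarrow> x = 0"
  using N unfolding is_norm_def by auto

lemma is_norm_minus_commute: "N (x - y) = N (y - x)"
  using is_norm_scaleR[of "-1" "y - x"] by simp

lemma is_norm_nonneg: "0 \<le> N x"
  using is_norm_triangle[of x "-x"] is_norm_minus_commute[of x 0] by (simp add: is_norm_zero)

lemma is_norm_sum_le: "N (sum f S) \<le> (\<Sum>i\<in>S. N (f i))"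
  by (induction S rule: infinite_finite_induct)
    (auto simp: is_norm_zero intro: order_trans[OF is_norm_triangle])

lemma is_norm_le_norm: "\<exists>C\<ge>0. \<forall>x. N x \<le> C * norm x"
proof (intro exI conjI allI)
  let ?C = "\<Sum>i\<in>UNIV. N (axis i (1::real))"
  show "0 \<le> ?C" by (simp add: sum_nonneg is_norm_nonneg)
  fix x :: "real^'n"
  have "N x = N (\<Sum>i\<in>UNIV. (x$i) *\<^sub>R axis i 1)"
    using basis_expansion[of x] by (simp add: scalar_mult_eq_scaleR)
  also have "\<dots> \<le> (\<Sum>i\<in>UNIV. \<bar>x$i\<bar> * N (axis i 1))"
    using is_norm_sum_le[of "\<lambda>i. (x$i) *\<^sub>R axis i 1" UNIV] by (simp add: is_norm_scaleR)
  also have "\<dots> \<le> (\<Sum>i\<in>UNIV. norm x * N (axis i 1))"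
    by (intro sum_mono mult_right_mono) (simp_all add: component_le_norm_cart is_norm_nonneg)
  finally show "N x \<le> ?C * norm x" by (simp add: sum_distrib_left mult.commute)
qed

lemma is_norm_ge_norm: "\<exists>c>0. \<forall>x. c * norm x \<le> N x"
proof -
  obtain C where C: "C \<ge> 0" "\<forall>x. N x \<le> C * norm x" using is_norm_le_norm by blast
  have "C-lipschitz_on UNIV N"
  proof (rule lipschitz_onI)
    fix x y :: "real^'n"
    have "\<bar>N x - N y\<bar> \<le> N (x - y)"
      using is_norm_triangle[of y "x - y"] is_norm_triangle[of x "y - x"] is_norm_minus_commute[of x y]
      by simp
    also have "\<dots> \<le> C * dist x y" using C by (simp add: dist_norm)
    finally show "dist (N x) (N y) \<le> C * dist x y" by (simp add: dist_real_def)
  qed (use C in auto)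
  hence "continuous_on (sphere 0 1) N"
    using lipschitz_on_continuous_on continuous_on_subset by blast
  moreover have "axis undefined 1 \<in> sphere (0::real^'n) 1" by (simp add: dist_norm)
  ultimately obtain x0 where x0: "x0 \<in> sphere 0 1" "\<forall>y\<in>sphere 0 1. N x0 \<le> N y"
    using continuous_attains_inf[OF compact_sphere] by blast
  have "N x0 * norm x \<le> N x" for x
  proof (cases "x = 0")
    case False
    have "N x0 \<le> N ((1 / norm x) *\<^sub>R x)" using x0 False by simp
    also have "\<dots> = N x / norm x" by (simp add: is_norm_scaleR)
    finally show ?thesis using False by (simp add: field_simps)
  qed (simp add: is_norm_zero)
  moreover have "N x0 > 0"
    using x0 is_norm_eq_0[of x0] is_norm_nonneg[of x0] by fastforce
  ultimately show ?thesis by (auto simp: mult.commute)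
qed

lemma opnorm_bdd_above: "bdd_above {N (M *v x) | x. N x \<le> 1}"
proof -
  obtain C where C: "C \<ge> 0" "\<forall>x. N x \<le> C * norm x" using is_norm_le_norm by blast
  obtain c where c: "c > 0" "\<forall>x. c * norm x \<le> N x" using is_norm_ge_norm by blast
  obtain K where K: "K \<ge> 0" "\<forall>x. norm (M *v x) \<le> norm x * K"
    using bounded_linear.nonneg_bounded[OF matrix_vector_mul_bounded_linear] by blast
  have "N (M *v x) \<le> C * ((1 / c) * K)" if "N x \<le> 1" for x
  proof -
    have "norm x \<le> 1 / c"
      using c that order_trans by (fastforce simp: field_simps)
    have "N (M *v x) \<le> C * (norm x * K)"
      using C K order_trans mult_left_mono by metis
    also have "\<dots> \<le> C * ((1 / c) * K)"
      using C K \<open>norm x \<le> 1 / c\<close> by (intro mult_left_mono mult_right_mono) auto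
    finally show ?thesis .
  qed
  thus ?thesis unfolding bdd_above_def by blast
qed

lemma opnorm_nonneg: "0 \<le> opnorm N M"
proof -
  have "N (M *v 0) \<le> opnorm N M"
    unfolding opnorm_def by (rule cSup_upper[OF _ opnorm_bdd_above]) (auto simp: is_norm_zero intro!: exI[of _ 0])
  thus ?thesis by (simp add: is_norm_zero)
qed

lemma opnorm_mult_le: "N (M *v x) \<le> opnorm N M * N x"
proof (cases "x = 0")
  case False
  hence nx: "N x > 0" using is_norm_eq_0[of x] is_norm_nonneg[of x] by linarith
  let ?y = "(1 / N x) *\<^sub>R x"
  have "N (M *v ?y) \<le> opnorm N M"
    unfolding opnorm_def using nx
    by (intro cSup_upper[OF _ opnorm_bdd_above]) (auto simp: is_norm_scaleR)
  moreover have "N (M *v ?y) = N (M *v x) / N x"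
    using nx by (simp add: matrix_vector_mult_scaleR is_norm_scaleR)
  ultimately show ?thesis using nx by (simp add: field_simps)
qed (simp add: is_norm_zero)

end

lemma delayed_recursion_le_bound:
  fixes a b :: "nat \<Rightarrow> real"
  assumes T: "0 < T" and c: "0 \<le> c" "c < 1" and \<beta>: "0 \<le> \<beta>"
    and init: "\<And>t. t < T \<Longrightarrow> a t \<le> b t"
    and rec: "\<And>t. T \<le> t \<Longrightarrow> a t \<le> c * a (t - T) + b t"
    and bound: "\<And>t. b t \<le> \<beta>"
  shows "a t \<le> \<beta> / (1 - c)"
proof (induction t rule: less_induct)
  case (less t)
  show ?case
  proof (cases "t < T")
    case True
    have "\<beta> \<le> \<beta> / (1 - c)" using \<beta> c by (simp add: field_simps)
    with True show ?thesis using init bound order_trans by metis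
  next
    case False
    hence "a t \<le> c * a (t - T) + b t" using rec by simp
    also have "\<dots> \<le> c * (\<beta> / (1 - c)) + \<beta>"
      using less.IH[of "t - T"] False T bound c by (intro add_mono mult_left_mono) auto
    also have "\<dots> = \<beta> / (1 - c)" using c by (simp add: field_simps)
    finally show ?thesis .
  qed
qed

lemma delayed_recursion_power_sum_le:
  fixes a b :: "nat \<Rightarrow> real"
  assumes c: "0 \<le> c" "c < 1" and q: "1 \<le> q"
    and a: "\<And>t. 0 \<le> a t" and b: "\<And>t. 0 \<le> b t"
    and init: "\<And>t. t < T \<Longrightarrow> a t \<le> b t"
    and rec: "\<And>t. T \<le> t \<Longrightarrow> a t \<le> c * a (t - T) + b t"
    and summable: "summable (\<lambda>t. b t ^ q)"
  shows "(\<Sum>t<n. a t ^ q) \<le> (1 / (1 - c)) ^ q * (\<Sum>t. b t ^ q)"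
proof -
  define K where "K = (1 / (1 - c)) ^ q"
  have K: "0 \<le> K" using c by (simp add: K_def)
  have one_le_K: "1 \<le> (1 - c) * K"
  proof -
    have "(1 - c) ^ q \<le> (1 - c) ^ 1"
      using c q by (intro power_decreasing) auto
    thus ?thesis using c by (simp add: K_def power_divide field_simps)
  qed
  define g where "g t = (if T \<le> t then a (t - T) ^ q else 0)" for t
  \<comment> \<open>\<open>a t = c * a (t - T) + (1 - c) * (b t / (1 - c))\<close> is a convex combination.\<close>
  have step: "a t ^ q \<le> c * g t + (1 - c) * K * b t ^ q" for t
  proof (cases "T \<le> t")
    case True
    have "a t ^ q \<le> (c * a (t - T) + (1 - c) * (b t / (1 - c))) ^ q"
      using rec[OF True] a c by (intro power_mono) auto
    also have "\<dots> \<le> c * a (t - T) ^ q + (1 - c) * (b t / (1 - c)) ^ q"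
      using a b c by (intro convex_comb_power_le) auto
    finally show ?thesis using True by (simp add: g_def K_def power_divide mult.assoc)
  next
    case False
    have "a t ^ q \<le> 1 * b t ^ q" using init[of t] False a by (simp add: power_mono)
    also have "\<dots> \<le> (1 - c) * K * b t ^ q" using one_le_K b by (intro mult_right_mono) auto
    finally show ?thesis using False by (simp add: g_def)
  qed
  have "(\<Sum>t<n. a t ^ q) \<le> (\<Sum>t<n. c * g t + (1 - c) * K * b t ^ q)"
    by (intro sum_mono step)
  also have "\<dots> = c * (\<Sum>t<n. g t) + (1 - c) * K * (\<Sum>t<n. b t ^ q)"
    by (simp add: sum.distrib sum_distrib_left)
  also have "\<dots> \<le> c * (\<Sum>t<n. a t ^ q) + (1 - c) * K * (\<Sum>t. b t ^ q)"
    using sum_delay_le[where g="\<lambda>s. a s ^ q" and n=n and T=T] sum_le_suminf[OF summable] a b c K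
    unfolding g_def by (intro add_mono mult_left_mono) auto
  finally have "(1 - c) * (\<Sum>t<n. a t ^ q) \<le> (1 - c) * (K * (\<Sum>t. b t ^ q))"
    by (simp add: algebra_simps)
  thus ?thesis using c by (simp add: K_def)
qed

lemma deadzone_gain_le:
  fixes m \<gamma> \<eta> s :: real
  assumes "0 \<le> \<gamma>" "\<gamma> < m" "0 \<le> s" "s \<le> m * \<eta> / (m - \<gamma>)"
  shows "m * max 0 (s - \<eta>) \<le> \<gamma> * s"
proof (cases "s \<le> \<eta>")
  case False
  have "(m - \<gamma>) * s \<le> m * \<eta>"
    using assms(2,4) by (simp add: field_simps)
  with False show ?thesis by (simp add: algebra_simps)
qed (use assms in auto)

lemma deadzone_recursion_le_bound:
  fixes s r :: "nat \<Rightarrow> real"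
  assumes T: "0 < T" and \<gamma>: "0 \<le> \<gamma>" "\<gamma> < m" and \<eta>: "0 \<le> \<eta>"
    and s: "\<And>t. 0 \<le> s t"
    and init: "\<And>t. t < T \<Longrightarrow> s t \<le> r t"
    and rec: "\<And>t. T \<le> t \<Longrightarrow> s t \<le> m * max 0 (s (t - T) - \<eta>) + r t"
    and r: "\<And>t. r t \<le> (1 - \<gamma>) * m / (m - \<gamma>) * \<eta>"
  shows "s t \<le> m * \<eta> / (m - \<gamma>)"
proof (induction t rule: less_induct)
  case (less t)
  define R where "R = m * \<eta> / (m - \<gamma>)"
  have "0 \<le> R" using \<gamma> \<eta> by (simp add: R_def)
  have r_R: "r t \<le> (1 - \<gamma>) * R" using r[of t] by (simp add: R_def)
  show ?case
  proof (cases "t < T")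
    case True
    have "(1 - \<gamma>) * R \<le> R" using \<gamma> \<open>0 \<le> R\<close> by (simp add: algebra_simps)
    thus ?thesis using init[OF True] r_R by (simp add: R_def)
  next
    case False
    hence "s t \<le> m * max 0 (s (t - T) - \<eta>) + r t" using rec by simp
    also have "\<dots> \<le> \<gamma> * s (t - T) + (1 - \<gamma>) * R"
      using less.IH[of "t - T"] False T \<gamma> s r_R
      by (intro add_mono deadzone_gain_le) auto
    also have "\<dots> \<le> \<gamma> * R + (1 - \<gamma>) * R"
      using less.IH[of "t - T"] False T \<gamma> by (intro add_right_mono mult_left_mono) (auto simp: R_def)
    also have "\<dots> = R" by (simp add: algebra_simps)
    finally show ?thesis by (simp add: R_def)
  qed
qed

lemma lpnorm_ge_norm:
  fixes N :: "real^'n \<Rightarrow> real"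
  assumes N: "is_norm N" and p: "1 \<le> p"
  shows "ereal (N (x t)) \<le> lpnorm N p x"
proof (cases p)
  case infinity
  thus ?thesis by (simp add: lpnorm_def) (rule SUP_upper, simp)
next
  case (enat q)
  with p have q: "1 \<le> q" by (simp add: one_enat_def)
  show ?thesis
  proof (cases "summable (\<lambda>k. N (x k) ^ q)")
    case True
    have "N (x t) ^ q \<le> (\<Sum>k. N (x k) ^ q)"
      using sum_le_suminf[OF True, of "{t}"] is_norm_nonneg[OF N] by simp
    hence "(N (x t) ^ q) powr (1 / real q) \<le> (\<Sum>k. N (x k) ^ q) powr (1 / real q)"
      using is_norm_nonneg[OF N] by (intro powr_mono2) auto
    thus ?thesis
      using True power_powr_inverse[of "N (x t)" q] is_norm_nonneg[OF N] q
      by (simp add: lpnorm_def enat)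
  qed (simp add: lpnorm_def enat)
qed

lemma lpnorm_le_delayed_recursion:
  fixes N :: "real^'n \<Rightarrow> real" and x y :: "nat \<Rightarrow> real^'n"
  assumes N: "is_norm N" and T: "0 < T" and c: "0 \<le> c" "c < 1" and p: "1 \<le> p"
    and init: "\<And>t. t < T \<Longrightarrow> N (x t) \<le> N (y t)"
    and rec: "\<And>t. T \<le> t \<Longrightarrow> N (x t) \<le> c * N (x (t - T)) + N (y t)"
  shows "lpnorm N p x \<le> ereal (1 / (1 - c)) * lpnorm N p y"
proof (cases p)
  case infinity
  show ?thesis
  proof (cases "lpnorm N p y")
    case (real \<beta>)
    have y: "N (y t) \<le> \<beta>" for t
      using lpnorm_ge_norm[OF N p, of y t] real by simp
    have "0 \<le> \<beta>" using is_norm_nonneg[OF N] y order_trans by blast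
    hence "N (x t) \<le> \<beta> / (1 - c)" for t
      using T c init rec y
      by (intro delayed_recursion_le_bound[where a="\<lambda>t. N (x t)" and b="\<lambda>t. N (y t)"]) auto
    hence "lpnorm N p x \<le> ereal (\<beta> / (1 - c))"
      by (simp add: lpnorm_def infinity SUP_least)
    thus ?thesis using real by simp
  qed (use c is_norm_nonneg[OF N] lpnorm_ge_norm[OF N p, of y 0] in auto)
next
  case (enat q)
  with p have q: "1 \<le> q" by (simp add: one_enat_def)
  show ?thesis
  proof (cases "summable (\<lambda>t. N (y t) ^ q)")
    case True
    let ?K = "(1 / (1 - c)) ^ q" and ?B = "\<Sum>t. N (y t) ^ q"
    have partial: "(\<Sum>t<n. N (x t) ^ q) \<le> ?K * ?B" for n
      using c q is_norm_nonneg[OF N] init rec True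
      by (intro delayed_recursion_power_sum_le[where T=T]) auto
    have summable_x: "summable (\<lambda>t. N (x t) ^ q)"
      using partial is_norm_nonneg[OF N] by (intro summableI_nonneg_bounded) auto
    have "(\<Sum>t. N (x t) ^ q) powr (1 / real q) \<le> (?K * ?B) powr (1 / real q)"
      using partial summable_x is_norm_nonneg[OF N]
      by (intro powr_mono2 suminf_le_const suminf_nonneg) auto
    also have "\<dots> = 1 / (1 - c) * ?B powr (1 / real q)"
      using c q True is_norm_nonneg[OF N]
      by (simp add: powr_mult suminf_nonneg power_powr_inverse)
    finally show ?thesis using summable_x True by (simp add: lpnorm_def enat)
  qed (use c in \<open>simp add: lpnorm_def enat\<close>)
qed

lemma etabar_ball_subset:
  assumes "ereal \<eta> \<le> etabar N W"
  shows "{v. N v < \<eta>} \<subseteq> W"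
proof
  fix v assume "v \<in> {v. N v < \<eta>}"
  hence "ereal (N v) < ereal \<eta>" by simp
  hence "ereal (N v) < etabar N W" using assms by (rule less_le_trans)
  then obtain \<eta>' where "{v. N v < \<eta>'} \<subseteq> W" "N v < \<eta>'"
    unfolding etabar_def less_Sup_iff by auto
  thus "v \<in> W" by blast
qed

context
  fixes N :: "real^'n \<Rightarrow> real" and W and sat :: "real^'n \<Rightarrow> real^'n"
  assumes N: "is_norm N"
    and sat_min: "\<And>v v'. v + v' \<in> W \<Longrightarrow> N (sat v - v) \<le> N v'"
begin

lemma sat_dist_le_norm:
  assumes "0 \<in> W"
  shows "N (v - sat v) \<le> N v"
  using sat_min[of v "- v"] assms is_norm_minus_commute[OF N, of v "sat v"]
    is_norm_minus_commute[OF N, of 0 v] by simp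

lemma sat_dist_le_deadzone:
  assumes \<eta>: "0 < \<eta>" and ball: "{v. N v < \<eta>} \<subseteq> W"
  shows "N (v - sat v) \<le> max 0 (N v - \<eta>)"
proof (cases "N v < \<eta>")
  case True
  hence "N (sat v - v) \<le> N 0" using sat_min[of v 0] ball by auto
  thus ?thesis using is_norm_minus_commute[OF N, of v "sat v"] by (simp add: is_norm_zero[OF N])
next
  case False
  \<comment> \<open>the point of norm \<open>\<tau> < \<eta>\<close> on the ray through \<open>v\<close> lies in \<open>W\<close>, at distance \<open>N v - \<tau>\<close> from \<open>v\<close>\<close>
  have "\<tau> \<le> N v - N (v - sat v)" if \<tau>: "0 < \<tau>" "\<tau> < \<eta>" for \<tau>
  proof -
    have v: "0 < N v" using False \<eta> by simp
    define u where "u = (\<tau> / N v) *\<^sub>R v"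
    have "N u < \<eta>" using v \<tau> by (simp add: u_def is_norm_scaleR[OF N])
    hence "N (sat v - v) \<le> N (u - v)" using sat_min[of v "u - v"] ball by auto
    also have "u - v = (\<tau> / N v - 1) *\<^sub>R v" by (simp add: u_def algebra_simps)
    also have "N \<dots> = N v - \<tau>"
      using v \<tau> False by (simp add: is_norm_scaleR[OF N] abs_if field_simps)
    finally show ?thesis using is_norm_minus_commute[OF N, of v "sat v"] by simp
  qed
  with \<eta> have "\<eta> \<le> N v - N (v - sat v)" by (rule dense_le_bounded)
  thus ?thesis by simp
qed

end

locale delayed_saturation_loop =
  fixes N :: "real^'n \<Rightarrow> real" and M :: "real^'n^'n" and T :: nat
    and W :: "(real^'n) set" and sat :: "real^'n \<Rightarrow> real^'n"
    and w what :: "nat \<Rightarrow> real^'n"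
  assumes norm: "is_norm N" and delay: "0 < T" and zero_in_W: "0 \<in> W"
    and sat_min: "\<And>v v'. v + v' \<in> W \<Longrightarrow> N (sat v - v) \<le> N v'"
    and hat_init: "\<And>t. t < T \<Longrightarrow> what t = w t"
    and hat_rec: "\<And>t. T \<le> t \<Longrightarrow> what t = M *v (what (t - T) - sat (what (t - T))) + w t"
begin

lemma hat_norm_le:
  assumes "T \<le> t"
  shows "N (what t) \<le> opnorm N M * N (what (t - T) - sat (what (t - T))) + N (w t)"
proof -
  let ?e = "what (t - T) - sat (what (t - T))"
  have "N (what t) \<le> N (M *v ?e) + N (w t)"
    using hat_rec[OF assms] is_norm_triangle[OF norm] by simp
  also have "\<dots> \<le> opnorm N M * N ?e + N (w t)"
    using opnorm_mult_le[OF norm] by (rule add_right_mono)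
  finally show ?thesis .
qed

lemma lpnorm_hat_le_small_gain:
  assumes "1 \<le> p" "opnorm N M < 1"
  shows "lpnorm N p what \<le> ereal (1 / (1 - opnorm N M)) * lpnorm N p w"
proof (rule lpnorm_le_delayed_recursion[OF norm delay opnorm_nonneg[OF norm] assms(2,1)])
  show "N (what t) \<le> N (w t)" if "t < T" for t using hat_init[OF that] by simp
  show "N (what t) \<le> opnorm N M * N (what (t - T)) + N (w t)" if "T \<le> t" for t
    using hat_norm_le[OF that] sat_dist_le_norm[OF norm sat_min zero_in_W]
      opnorm_nonneg[OF norm] by (meson add_right_mono mult_left_mono order_trans)
qed

lemma hat_saturation_gain_le:
  assumes \<gamma>: "0 \<le> \<gamma>" "\<gamma> < opnorm N M" and \<eta>: "0 < etabar N W" and p: "1 \<le> p"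
    and w: "lpnorm N p w \<le> ereal ((1 - \<gamma>) * opnorm N M / (opnorm N M - \<gamma>)) * etabar N W"
  shows "opnorm N M * N (what t - sat (what t)) \<le> \<gamma> * N (what t)"
proof (cases "etabar N W")
  case PInf
  have "N (v - sat v) \<le> max 0 (N v - (N v + 1))" for v
    using PInf is_norm_nonneg[OF norm, of v] etabar_ball_subset[where \<eta>="N v + 1" and N=N and W=W]
    by (intro sat_dist_le_deadzone[OF norm sat_min]) auto
  hence "N (what t - sat (what t)) = 0"
    using is_norm_nonneg[OF norm] by (simp add: order_antisym)
  thus ?thesis using is_norm_nonneg[OF norm] \<gamma> by simp
next
  case (real \<eta>)
  let ?m = "opnorm N M"
  have dz: "N (v - sat v) \<le> max 0 (N v - \<eta>)" for v
    using real \<eta> etabar_ball_subset[where \<eta>=\<eta> and N=N and W=W]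
    by (intro sat_dist_le_deadzone[OF norm sat_min]) auto
  have w_bound: "N (w t) \<le> (1 - \<gamma>) * ?m / (?m - \<gamma>) * \<eta>" for t
    using order_trans[OF lpnorm_ge_norm[OF norm p] w] real by simp
  have "N (what t) \<le> ?m * \<eta> / (?m - \<gamma>)" for t
  proof (rule deadzone_recursion_le_bound[OF delay \<gamma>, where r="\<lambda>t. N (w t)"])
    show "N (what t) \<le> ?m * max 0 (N (what (t - T)) - \<eta>) + N (w t)" if "T \<le> t" for t
      using hat_norm_le[OF that] dz mult_left_mono[OF dz opnorm_nonneg[OF norm]]
      by (meson add_right_mono order_trans)
  qed (use real \<eta> is_norm_nonneg[OF norm] hat_init w_bound in auto)
  hence "?m * max 0 (N (what t) - \<eta>) \<le> \<gamma> * N (what t)"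
    using \<gamma> is_norm_nonneg[OF norm] by (intro deadzone_gain_le) auto
  thus ?thesis using dz mult_left_mono[OF dz opnorm_nonneg[OF norm]] order_trans by blast
qed (use \<eta> in simp)

lemma lpnorm_hat_le_saturated:
  assumes \<gamma>: "0 \<le> \<gamma>" "\<gamma> < 1" "\<gamma> < opnorm N M" and \<eta>: "0 < etabar N W" and p: "1 \<le> p"
    and w: "lpnorm N p w \<le> ereal ((1 - \<gamma>) * opnorm N M / (opnorm N M - \<gamma>)) * etabar N W"
  shows "lpnorm N p what \<le> ereal (1 / (1 - \<gamma>)) * lpnorm N p w"
proof (rule lpnorm_le_delayed_recursion[OF norm delay \<gamma>(1,2) p])
  show "N (what t) \<le> N (w t)" if "t < T" for t using hat_init[OF that] by simp
  show "N (what t) \<le> \<gamma> * N (what (t - T)) + N (w t)" if "T \<le> t" for t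
    using hat_norm_le[OF that] hat_saturation_gain_le[OF \<gamma>(1,3) \<eta> p w, of "t - T"] by linarith
qed

end

theorem mainTheorem9:
  fixes N :: "real^'n \<Rightarrow> real"
    and A :: "real^'n^'n"
    and T :: nat
    and W :: "(real^'n) set"
    and sat :: "real^'n \<Rightarrow> real^'n"
    and p :: enat
    and w what :: "nat \<Rightarrow> real^'n"
  assumes normN: "is_norm N"
    and T1: "T \<ge> 1"
    and Wcl: "closed W" and Wcvx: "convex W" and W0: "0 \<in> W"
    and sat_in: "\<forall>v. sat v \<in> W"
    and sat_min: "\<forall>v v'. v + v' \<in> W \<longrightarrow> N (sat v - v) \<le> N v'"
    and eta_pos: "etabar N W > 0"
    and p1: "p \<ge> 1"
    and hat_init: "\<forall>t < T. what t = w t"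
    and hat_rec: "\<forall>t \<ge> T. what t = matpow A T *v (what (t - T) - sat (what (t - T))) + w t"
  shows "(\<forall>\<gamma>::real. 0 \<le> \<gamma> \<and> \<gamma> < min 1 (opnorm N (matpow A T)) \<longrightarrow>
            lpnorm N p w \<le> ereal ((1 - \<gamma>) * opnorm N (matpow A T) / (opnorm N (matpow A T) - \<gamma>)) * etabar N W
            \<longrightarrow> lpnorm N p what \<le> ereal (1 / (1 - \<gamma>)) * lpnorm N p w)
       \<and> (opnorm N (matpow A T) < 1 \<longrightarrow> lpnorm N p w < \<infinity> \<longrightarrow>
            lpnorm N p what \<le> ereal (1 / (1 - opnorm N (matpow A T))) * lpnorm N p w)"
proof -
  interpret delayed_saturation_loop N "matpow A T" T W sat w what
    using normN T1 W0 sat_min hat_init hat_rec by unfold_locales auto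
  show ?thesis
    using lpnorm_hat_le_saturated[OF _ _ _ eta_pos p1] lpnorm_hat_le_small_gain[OF p1] by auto
qed

end
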